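(* Let $p\in[0,1]^N$ and let $\mathcal L:=\{i\in\{\tilde k+1,\dots,N\}:B^{\mathcal N}_{1:i}=i-1\}$. Then $$\mathcal L=\{\tilde k(p'):\ p'\in[0,1]^N,\ \|p-p'\|_0\le1,\ \tilde k(p')>\tilde k\}.$$
   Context: $q\in(0,1)$, $N\ge1$. For $x\in[0,1]^N$, $B^{\mathcal N}_{1:i}(x)=|\{j\in\{1,\dots,N\}:0\le x_j<iq/N\}|$ ($B^{\mathcal N}_{1:0}=0$) and $\tilde k(x)=\max\{i\in\{0,\dots,N\}:B^{\mathcal N}_{1:i}(x)=i\}$ is the Benjamini–Hochberg rejection count. Write $B^{\mathcal N}_{1:i}=B^{\mathcal N}_{1:i}(p)$ and $\tilde k=\tilde k(p)$. $\|p-p'\|_0$ is the number of indices at which $p$ and $p'$ differ. *)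

theory Defs
  imports Complex_Main
begin

text \<open>Vectors in [0,1]^N are represented as functions nat \<Rightarrow> real, coordinates indexed by 1..N.\<close>

definition in_unit_cube :: "nat \<Rightarrow> (nat \<Rightarrow> real) \<Rightarrow> bool" where
  "in_unit_cube N x \<longleftrightarrow> (\<forall>j\<in>{1..N}. 0 \<le> x j \<and> x j \<le> 1)"

definition BN :: "real \<Rightarrow> nat \<Rightarrow> (nat \<Rightarrow> real) \<Rightarrow> nat \<Rightarrow> nat" where
  "BN q N x i = card {j\<in>{1..N}. 0 \<le> x j \<and> x j < real i * q / real N}"

definition ktilde :: "real \<Rightarrow> nat \<Rightarrow> (nat \<Rightarrow> real) \<Rightarrow> nat" where
  "ktilde q N x = Max {i\<in>{0..N}. BN q N x i = i}"

definition hamming0 :: "nat \<Rightarrow> (nat \<Rightarrow> real) \<Rightarrow> (nat \<Rightarrow> real) \<Rightarrow> nat" where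
  "hamming0 N x y = card {j\<in>{1..N}. x j \<noteq> y j}"

end

theory Submission
  imports Defs
begin

(* B_i is nondecreasing in i and B_N <= N; once B_i > i, every later B_m exceeds m as well,
   so above the last fixed point ktilde we have B_i < i. Changing one p-value moves each B_i by
   at most one, hence a new rejection count k > ktilde forces B_k = k - 1.
   Conversely, if B_i = i - 1 for some i > ktilde, lower to 0 the smallest p-value that is
   at least iq/N. This raises B_m by one exactly at the levels m whose threshold mq/N does not
   exceed that value; for m > i these levels still had B_m = i - 1, and all other B_m are
   unchanged, so i becomes the last fixed point. *)

lemma BN_0 [simp]: "BN q N x 0 = 0"
  unfolding BN_def by simp

lemma BN_le_N: "BN q N x i \<le> N"
proof -
  have "BN q N x i \<le> card {1..N}"
    unfolding BN_def by (rule card_mono) auto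
  then show ?thesis by simp
qed

lemma BN_mono:
  assumes "0 \<le> q" "i \<le> i'"
  shows "BN q N x i \<le> BN q N x i'"
proof -
  have "real i * q / real N \<le> real i' * q / real N"
    using assms by (intro divide_right_mono mult_right_mono) auto
  then show ?thesis
    unfolding BN_def by (intro card_mono) auto
qed

lemma BN_le_add_hamming0: "BN q N y i \<le> BN q N x i + hamming0 N x y"
proof -
  let ?S = "\<lambda>z. {j\<in>{1..N}. 0 \<le> z j \<and> z j < real i * q / real N}"
  have "?S y \<subseteq> ?S x \<union> {j\<in>{1..N}. x j \<noteq> y j}" by auto
  then have "card (?S y) \<le> card (?S x \<union> {j\<in>{1..N}. x j \<noteq> y j})"
    by (intro card_mono) auto
  also have "\<dots> \<le> card (?S x) + card {j\<in>{1..N}. x j \<noteq> y j}"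
    by (rule card_Un_le)
  finally show ?thesis
    unfolding BN_def hamming0_def .
qed

lemma BN_fun_upd_zero:
  assumes "0 < q" "0 < m" "j \<in> {1..N}"
  shows "BN q N (x(j := 0)) m
       = BN q N x m + (if 0 \<le> x j \<and> x j < real m * q / real N then 0 else 1)"
proof -
  let ?S = "{k\<in>{1..N}. 0 \<le> x k \<and> x k < real m * q / real N}"
  have "real m * q / real N > 0" using assms by auto
  then have "{k\<in>{1..N}. 0 \<le> (x(j := 0)) k \<and> (x(j := 0)) k < real m * q / real N}
           = insert j ?S"
    using assms(3) by auto
  then show ?thesis
    using assms(3) unfolding BN_def by (simp add: card_insert_if)
qed

lemma hamming0_fun_upd_le_1: "hamming0 N x (x(j := c)) \<le> 1"
proof -
  have "card {k\<in>{1..N}. x k \<noteq> (x(j := c)) k} \<le> card {j}"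
    by (rule card_mono) auto
  then show ?thesis
    unfolding hamming0_def by simp
qed

lemma in_unit_cube_fun_upd:
  "in_unit_cube N x \<Longrightarrow> 0 \<le> c \<Longrightarrow> c \<le> 1 \<Longrightarrow> in_unit_cube N (x(j := c))"
  unfolding in_unit_cube_def by auto

lemma ktilde_fixed: "BN q N x (ktilde q N x) = ktilde q N x"
  and ktilde_le_N: "ktilde q N x \<le> N"
proof -
  have "ktilde q N x \<in> {i\<in>{0..N}. BN q N x i = i}"
    unfolding ktilde_def by (rule Max_in) auto
  then show "BN q N x (ktilde q N x) = ktilde q N x" "ktilde q N x \<le> N" by auto
qed

lemma ktilde_greatest: "i \<le> N \<Longrightarrow> BN q N x i = i \<Longrightarrow> i \<le> ktilde q N x"
  unfolding ktilde_def by (intro Max_ge) auto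

lemma ktilde_eqI:
  assumes "i \<le> N" "BN q N x i = i" "\<And>m. i < m \<Longrightarrow> m \<le> N \<Longrightarrow> BN q N x m \<noteq> m"
  shows "ktilde q N x = i"
  using ktilde_greatest[OF assms(1,2)] assms(3)[of "ktilde q N x"] ktilde_fixed ktilde_le_N
  by fastforce

lemma BN_less_above_ktilde:
  assumes "0 \<le> q" "ktilde q N x < k" "k \<le> N"
  shows "BN q N x k < k"
proof (rule ccontr)
  assume "\<not> BN q N x k < k"
  moreover have "BN q N x k \<noteq> k"
    using ktilde_greatest[of k N q x] assms(2,3) by auto
  ultimately have "k < BN q N x k" by simp
  have "n < BN q N x n" if "k \<le> n" "n \<le> N" for n
    using that
  proof (induction rule: dec_induct)
    case base
    show ?case by fact
  next
    case (step n)
    have "Suc n \<le> BN q N x (Suc n)"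
      using step BN_mono[OF assms(1), of n "Suc n" N x] by simp
    moreover have "BN q N x (Suc n) \<noteq> Suc n"
      using ktilde_greatest[of "Suc n" N q x] step(1,4) assms(2) by auto
    ultimately show ?case by simp
  qed
  from this[OF assms(3) order_refl] BN_le_N[of q N x N] show False
    by simp
qed

lemma BN_at_ktilde_of_neighbour:
  assumes "0 \<le> q" "hamming0 N p p' \<le> 1" "ktilde q N p < ktilde q N p'"
  shows "BN q N p (ktilde q N p') = ktilde q N p' - 1"
  using BN_less_above_ktilde[OF assms(1,3) ktilde_le_N]
    BN_le_add_hamming0[of q N p' "ktilde q N p'" p] ktilde_fixed[of q N p'] assms(2)
  by linarith

lemma exists_min_at_or_above_threshold:
  assumes "in_unit_cube N p" "BN q N p i < N"
  obtains j0 where "j0 \<in> {1..N}" "real i * q / real N \<le> p j0"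
    "\<forall>j\<in>{1..N}. real i * q / real N \<le> p j \<longrightarrow> p j0 \<le> p j"
proof -
  define A where "A = {j\<in>{1..N}. real i * q / real N \<le> p j}"
  have "A \<noteq> {}"
  proof
    assume "A = {}"
    then have "{j\<in>{1..N}. 0 \<le> p j \<and> p j < real i * q / real N} = {1..N}"
      using assms(1) unfolding A_def in_unit_cube_def by force
    with assms(2) show False
      unfolding BN_def by simp
  qed
  then obtain j0 where "j0 \<in> A" "\<forall>j\<in>A. \<not> p j < p j0"
    using ex_is_arg_min_if_finite[of A p] unfolding A_def is_arg_min_def by auto
  then show thesis
    using that unfolding A_def by (auto simp: not_less)
qed

lemma ktilde_fun_upd_min_at_or_above_threshold:
  assumes "0 < q" "ktilde q N p < i" "i \<le> N" "BN q N p i = i - 1"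
    and j0: "j0 \<in> {1..N}" "real i * q / real N \<le> p j0"
    "\<forall>j\<in>{1..N}. real i * q / real N \<le> p j \<longrightarrow> p j0 \<le> p j"
  shows "ktilde q N (p(j0 := 0)) = i"
proof (rule ktilde_eqI)
  let ?t = "\<lambda>m::nat. real m * q / real N"
  let ?S = "\<lambda>m. {j\<in>{1..N}. 0 \<le> p j \<and> p j < ?t m}"
  have "0 \<le> ?t i"
    using assms(1) by simp
  with j0(2) have "0 \<le> p j0"
    by linarith
  show "BN q N (p(j0 := 0)) i = i"
    using BN_fun_upd_zero[OF assms(1) _ j0(1), of i p] assms(2,4) j0(2) by simp
  fix m assume "i < m" "m \<le> N"
  show "BN q N (p(j0 := 0)) m \<noteq> m"
  proof (cases "p j0 < ?t m")
    case True
    then have "BN q N (p(j0 := 0)) m = BN q N p m"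
      using BN_fun_upd_zero[OF assms(1) _ j0(1), of m p] \<open>i < m\<close> \<open>0 \<le> p j0\<close> by simp
    with BN_less_above_ktilde[of q N p m] assms(1,2) \<open>i < m\<close> \<open>m \<le> N\<close> show ?thesis
      by simp
  next
    case False
    \<comment> \<open>no p-value lies in [iq/N, mq/N), since p j0 is the least one from iq/N on\<close>
    have "?S m \<subseteq> ?S i"
      using False j0(3) by (fastforce simp: not_le)
    then have "BN q N p m \<le> i - 1"
      using card_mono[of "?S i" "?S m"] assms(4) unfolding BN_def by simp
    moreover have "BN q N (p(j0 := 0)) m = BN q N p m + 1"
      using BN_fun_upd_zero[OF assms(1) _ j0(1), of m p] False \<open>i < m\<close> by simp
    ultimately show ?thesis
      using assms(2) \<open>i < m\<close> by linarith
  qed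
qed (use assms(3) in simp)

theorem proposition1:
  fixes q :: real and N :: nat and p :: "nat \<Rightarrow> real"
  assumes "0 < q" "q < 1" "1 \<le> N" "in_unit_cube N p"
  shows "{i\<in>{ktilde q N p + 1..N}. BN q N p i = i - 1}
       = {ktilde q N p' | p'. in_unit_cube N p' \<and> hamming0 N p p' \<le> 1
                              \<and> ktilde q N p' > ktilde q N p}"
proof (intro equalityI subsetI)
  fix i assume "i \<in> {i\<in>{ktilde q N p + 1..N}. BN q N p i = i - 1}"
  then have i: "ktilde q N p < i" "i \<le> N" "BN q N p i = i - 1" by auto
  then have "BN q N p i < N" by linarith
  with assms(4) obtain j0 where "j0 \<in> {1..N}" "real i * q / real N \<le> p j0"
    "\<forall>j\<in>{1..N}. real i * q / real N \<le> p j \<longrightarrow> p j0 \<le> p j"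
    by (rule exists_min_at_or_above_threshold)
  with assms(1) i have "ktilde q N (p(j0 := 0)) = i"
    by (intro ktilde_fun_upd_min_at_or_above_threshold)
  moreover have "in_unit_cube N (p(j0 := 0))"
    using assms(4) by (rule in_unit_cube_fun_upd) simp_all
  ultimately show "i \<in> {ktilde q N p' | p'. in_unit_cube N p' \<and> hamming0 N p p' \<le> 1
                              \<and> ktilde q N p' > ktilde q N p}"
    using hamming0_fun_upd_le_1 i(1) by blast
next
  fix k assume "k \<in> {ktilde q N p' | p'. in_unit_cube N p' \<and> hamming0 N p p' \<le> 1
                              \<and> ktilde q N p' > ktilde q N p}"
  then obtain p' where "k = ktilde q N p'" "hamming0 N p p' \<le> 1" "ktilde q N p < k"
    by blast
  with assms(1) BN_at_ktilde_of_neighbour[of q N p p'] ktilde_le_N[of q N p']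
  show "k \<in> {i\<in>{ktilde q N p + 1..N}. BN q N p i = i - 1}"
    by auto
qed

end
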